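(* Let $I$ be an interval containing $t_0$, let $\mu$ be a nonvanishing differentiable real function on $I$ and $\omega^2$ a real function on $I$. Let $r(t)$ be the solution of the initial value problem $$\ddot r+\frac{\dot\mu(t)}{\mu(t)}\dot r+\omega^2(t) r=0,\qquad r(t_0)=r_0\neq 0,\quad \dot r(t_0)=0,$$ and define $$\eta(x,t)=\frac{r(t_0)}{r(t)}\,x,\qquad \tau(t)=r^2(t_0)\int_{t_0}^{t}\frac{d\xi}{\mu(\xi)r^2(\xi)}\quad(\text{so }\tau(t_0)=0).$$ Let $\varphi(\eta,\tau)$ be the solution of the initial value problem for the classical heat equation $$\varphi_\tau=\tfrac12\varphi_{\eta\eta},\qquad \varphi(\eta,0)=\Phi(\eta,t_0),\quad -\infty<\eta<\infty.$$ Then the initial value problem for the variable parametric parabolic equation $$\frac{\partial\Phi}{\partial t}=\frac{1}{2\mu(t)}\frac{\partial^2\Phi}{\partial x^2}+\frac{\mu(t)\omega^2(t)}{2}x^2\Phi,\qquad \Phi(x,t)|_{t=t_0}=\Phi(x,t_0),\quad -\infty<x<\infty,$$ has the solution $$\Phi(x,t)=\sqrt{\frac{r(t_0)}{r(t)}}\;\exp\!\left(-\frac{\mu(t)\dot r(t)}{2r(t)}x^2\right)\varphi\big(\eta(x,t),\tau(t)\big).$$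
   Context: Dots denote derivatives with respect to $t$. The formula is considered for $t$ at which $r(t)\neq 0$; the square root (equivalently $\tfrac12\ln(r(t_0)/r(t))$ in the exponent) is allowed to be complex-valued. *)

theory Defs
  imports "HOL-Analysis.Analysis"
begin

definition oint :: "real \<Rightarrow> real \<Rightarrow> (real \<Rightarrow> real) \<Rightarrow> real" where
  "oint a b f = (if a \<le> b then integral {a..b} f else - integral {b..a} f)"

definition tau :: "(real \<Rightarrow> real) \<Rightarrow> (real \<Rightarrow> real) \<Rightarrow> real \<Rightarrow> real \<Rightarrow> real" where
  "tau \<mu> r t0 t = (r t0)\<^sup>2 * oint t0 t (\<lambda>\<xi>. 1 / (\<mu> \<xi> * (r \<xi>)\<^sup>2))"

definition eta :: "(real \<Rightarrow> real) \<Rightarrow> real \<Rightarrow> real \<Rightarrow> real \<Rightarrow> real" where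
  "eta r t0 x t = r t0 / r t * x"

text \<open>The transformation formula for Phi; rd is the derivative of r.\<close>
definition Phi :: "(real \<Rightarrow> real) \<Rightarrow> (real \<Rightarrow> real) \<Rightarrow> (real \<Rightarrow> real)
     \<Rightarrow> (real \<Rightarrow> real \<Rightarrow> complex) \<Rightarrow> real \<Rightarrow> real \<Rightarrow> real \<Rightarrow> complex" where
  "Phi \<mu> r rd \<phi> t0 x t =
     csqrt (complex_of_real (r t0 / r t))
     * exp (complex_of_real (- (\<mu> t * rd t) / (2 * r t) * x\<^sup>2))
     * \<phi> (eta r t0 x t) (tau \<mu> r t0 t)"

end

theory Submission
  imports Defs
begin

text \<open>Write \<open>B = r(t\<^sub>0)/r\<close> and \<open>\<alpha> = -\<mu>r'/(2r)\<close>, so that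
  \<open>\<Phi>(x,t) = \<surd>B \<cdot> exp(\<alpha>x\<^sup>2) \<cdot> \<phi>(Bx, \<tau>)\<close>. The chain rule expresses \<open>\<Phi>\<^sub>t\<close> and \<open>\<Phi>\<^sub>x\<^sub>x\<close>
  through \<open>\<phi>\<close>, \<open>\<phi>\<^sub>\<eta>\<close> and \<open>\<phi>\<^sub>\<eta>\<^sub>\<eta>\<close>, and the coefficients match thanks to the heat equation
  \<open>\<phi>\<^sub>\<tau> = \<phi>\<^sub>\<eta>\<^sub>\<eta>/2\<close> and the identities \<open>B' = 2\<alpha>B/\<mu>\<close>, \<open>(\<surd>B)' = (\<alpha>/\<mu>)\<surd>B\<close>,
  \<open>\<tau>' = B\<^sup>2/\<mu>\<close> and \<open>\<alpha>' = 2\<alpha>\<^sup>2/\<mu> + \<mu>\<omega>\<^sup>2/2\<close>; the last one is a Riccati form of the ODE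
  for \<open>r\<close>. As \<open>r\<close> does not vanish between \<open>t\<^sub>0\<close> and \<open>t\<close>, \<open>B\<close> stays positive, so the complex
  square root is the real one and is differentiable.\<close>

lemma same_sign_on_segment:
  fixes f :: "real \<Rightarrow> real"
  assumes "continuous_on (closed_segment a b) f" "\<forall>s\<in>closed_segment a b. f s \<noteq> 0"
  shows "0 < f a * f b"
proof (rule ccontr)
  assume "\<not> 0 < f a * f b"
  then have "0 \<in> closed_segment (f a) (f b)"
    by (auto simp: closed_segment_eq_real_ivl zero_less_mult_iff not_less split: if_splits)
  moreover have "closed_segment (f a) (f b) \<subseteq> f ` closed_segment a b"
    using connected_continuous_image[OF assms(1)]
    by (intro closed_segment_subset) (auto simp: is_interval_connected_1[symmetric] is_interval_convex)
  ultimately show False using assms(2) by auto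
qed

lemma oint_eq_integral_diff:
  fixes f :: "real \<Rightarrow> real"
  assumes "continuous_on {a..b} f" "t0 \<in> {a..b}" "s \<in> {a..b}"
  shows "oint t0 s f = integral {a..s} f - integral {a..t0} f"
proof -
  have combine: "integral {a..u} f + integral {u..v} f = integral {a..v} f" if "a \<le> u" "u \<le> v" "v \<le> b" for u v
  proof (rule Henstock_Kurzweil_Integration.integral_combine[OF that(1,2)])
    show "f integrable_on {a..v}"
      by (intro integrable_continuous_interval continuous_on_subset[OF assms(1)]) (use that in auto)
  qed
  show ?thesis
  proof (cases "t0 \<le> s")
    case True
    with assms combine[of t0 s] show ?thesis by (simp add: oint_def)
  next
    case False
    with assms combine[of s t0] show ?thesis by (simp add: oint_def)
  qed
qed

lemma at_within_interval_eq_closed_interval: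
  fixes S :: "real set"
  assumes "is_interval S" "t \<in> S"
  obtains a b where "a \<le> t" "t \<le> b" "{a..b} \<subseteq> S" "at t within {a..b} = at t within S"
proof -
  obtain a where a: "a \<in> S" "a \<le> t" "a < t \<or> (\<forall>s\<in>S. t \<le> s)"
  proof (cases "\<exists>c\<in>S. c < t")
    case True
    then obtain c where "c \<in> S" "c < t" by blast
    then show ?thesis using that[of c] by simp
  next
    case False
    then show ?thesis using that[of t] assms(2) by (simp add: not_less)
  qed
  obtain b where b: "b \<in> S" "t \<le> b" "t < b \<or> (\<forall>s\<in>S. s \<le> t)"
  proof (cases "\<exists>c\<in>S. t < c")
    case True
    then obtain c where "c \<in> S" "t < c" by blast
    then show ?thesis using that[of c] by simp
  next
    case False
    then show ?thesis using that[of t] assms(2) by (simp add: not_less)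
  qed
  have ab: "{a..b} \<subseteq> S"
    using mem_is_interval_1_I[OF assms(1) a(1) b(1)] by auto
  define e where "e = min (if a < t then t - a else 1) (if t < b then b - t else 1)"
  have "e > 0" and e: "a < t \<Longrightarrow> e \<le> t - a" "t < b \<Longrightarrow> e \<le> b - t"
    by (simp_all add: e_def)
  have "s \<in> {a..b}" if "s \<in> S" "dist s t < e" for s
  proof -
    have st: "\<bar>s - t\<bar> < e" using that(2) by (simp add: dist_real_def)
    have "a \<le> s"
    proof (cases "a < t")
      case True
      with e(1) st show ?thesis by linarith
    next
      case False
      with a(2,3) that(1) show ?thesis by force
    qed
    moreover have "s \<le> b"
    proof (cases "t < b")
      case True
      with e(2) st show ?thesis by linarith
    next
      case False
      with b(2,3) that(1) show ?thesis by force
    qed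
    ultimately show ?thesis by simp
  qed
  then have "{a..b} \<inter> ball t e - {t} = S \<inter> ball t e - {t}"
    using ab by (auto simp: dist_commute)
  then have "at t within {a..b} = at t within S"
    by (rule at_within_nhd[rotated 2]) (use \<open>e > 0\<close> in auto)
  then show ?thesis using that a b ab by blast
qed

lemma oint_has_real_derivative:
  fixes f :: "real \<Rightarrow> real"
  assumes S: "is_interval S" "t0 \<in> S" "t \<in> S" and f: "continuous_on S f"
  shows "((\<lambda>s. oint t0 s f) has_real_derivative f t) (at t within S)"
proof -
  obtain a b where ab: "a \<le> t" "t \<le> b" "{a..b} \<subseteq> S" "at t within {a..b} = at t within S"
    using at_within_interval_eq_closed_interval[OF S(1,3)] .
  define A B where "A = min a t0" and "B = max b t0"
  have "a \<in> S" "b \<in> S" using ab(1-3) by auto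
  then have A: "A \<in> S" and B: "B \<in> S" using S(2) by (simp_all add: A_def B_def min_def max_def)
  have AB: "{A..B} \<subseteq> S"
    by (intro subsetI, rule mem_is_interval_1_I[OF S(1) A B]) auto
  have "{a..b} \<subseteq> {A..B}" by (simp add: A_def B_def)
  then have "at t within S \<le> at t within {A..B}"
    unfolding ab(4)[symmetric] by (rule at_le)
  then have within: "at t within {A..B} = at t within S"
    using at_le[OF AB] by (rule antisym[rotated])
  have fAB: "continuous_on {A..B} f" using continuous_on_subset[OF f AB] .
  have tAB: "t \<in> {A..B}" and t0AB: "t0 \<in> {A..B}" using ab by (auto simp: A_def B_def)
  have "((\<lambda>s. integral {A..s} f - integral {A..t0} f) has_real_derivative f t) (at t within {A..B})"
    using DERIV_diff[OF integral_has_real_derivative[OF fAB tAB] DERIV_const] by simp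
  then have "((\<lambda>s. oint t0 s f) has_real_derivative f t) (at t within {A..B})"
    by (rule has_field_derivative_transform_within[where d=1])
       (use tAB oint_eq_integral_diff[OF fAB t0AB] in auto)
  then show ?thesis using within by simp
qed

lemma tau_has_real_derivative:
  fixes \<mu> r :: "real \<Rightarrow> real"
  assumes I: "is_interval I" "t0 \<in> I" "t \<in> I"
    and cont: "continuous_on I \<mu>" "continuous_on I r"
    and nz: "\<forall>s\<in>I. \<mu> s \<noteq> 0" "\<forall>s\<in>closed_segment t0 t. r s \<noteq> 0"
  shows "(tau \<mu> r t0 has_real_derivative (r t0)\<^sup>2 / (\<mu> t * (r t)\<^sup>2)) (at t within I)"
proof -
  have "(r \<longlongrightarrow> r t) (at t within I)"
    using cont(2) I(3) by (simp add: continuous_on_def)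
  moreover have "r t \<noteq> 0" using nz(2) by simp
  ultimately have "eventually (\<lambda>s. r s \<noteq> 0) (at t within I)"
    by (rule tendsto_imp_eventually_ne)
  then obtain \<delta> where "\<delta> > 0" and \<delta>: "\<And>s. s \<in> I \<Longrightarrow> dist s t < \<delta> \<Longrightarrow> r s \<noteq> 0"
    using \<open>r t \<noteq> 0\<close> unfolding eventually_at by (metis dist_pos_lt)
  txt \<open>An interval containing \<open>t\<^sub>0\<close> on which the integrand is continuous and which
    coincides with \<open>I\<close> near \<open>t\<close>.\<close>
  define J where "J = I \<inter> (closed_segment t0 t \<union> ball t \<delta>)"
  have "is_interval (closed_segment t0 t \<union> ball t \<delta>)"
    unfolding is_interval_connected_1
    by (intro connected_Un) (use \<open>\<delta> > 0\<close> in auto)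
  then have J: "is_interval J" "t0 \<in> J" "t \<in> J"
    using I is_interval_Int \<open>\<delta> > 0\<close> by (auto simp: J_def)
  have "J \<subseteq> I" by (auto simp: J_def)
  have "continuous_on J (\<lambda>\<xi>. 1 / (\<mu> \<xi> * (r \<xi>)\<^sup>2))"
    using nz \<delta> \<open>J \<subseteq> I\<close>
    by (intro continuous_intros continuous_on_subset[OF cont(1)] continuous_on_subset[OF cont(2)])
       (auto simp: J_def dist_commute)
  from oint_has_real_derivative[OF J this]
  have "(tau \<mu> r t0 has_real_derivative (r t0)\<^sup>2 * (1 / (\<mu> t * (r t)\<^sup>2))) (at t within J)"
    unfolding tau_def by (rule DERIV_cmult)
  moreover have "at t within J = at t within I"
    by (rule at_within_nhd[of _ "ball t \<delta>"]) (use \<open>\<delta> > 0\<close> in \<open>auto simp: J_def\<close>)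
  ultimately show ?thesis by simp
qed

lemma has_vector_derivative_exp_of_real:
  assumes "(f has_real_derivative D) (at y within S)"
  shows "((\<lambda>z. exp (complex_of_real (f z))) has_vector_derivative
           of_real D * exp (of_real (f y))) (at y within S)"
proof -
  have "((exp \<circ> (\<lambda>z. complex_of_real (f z))) has_vector_derivative
          of_real D * exp (of_real (f y))) (at y within S)"
    by (rule field_vector_diff_chain_within[OF has_vector_derivative_of_real[OF assms]])
       (rule has_field_derivative_at_within[OF DERIV_exp])
  then show ?thesis by (simp add: o_def)
qed

lemma has_vector_derivative_csqrt_of_real:
  assumes "(f has_real_derivative D) (at y within S)" "f y > 0"
  shows "((\<lambda>z. csqrt (complex_of_real (f z))) has_vector_derivative
           of_real (D / (2 * sqrt (f y)))) (at y within S)"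
proof -
  have "complex_of_real (f y) \<notin> \<real>\<^sub>\<le>\<^sub>0"
    using assms(2) by (simp add: complex_nonpos_Reals_iff)
  then have "((csqrt \<circ> (\<lambda>z. complex_of_real (f z))) has_vector_derivative
          of_real D * inverse (2 * csqrt (of_real (f y)))) (at y within S)"
    by (rule field_vector_diff_chain_within[OF has_vector_derivative_of_real[OF assms(1)]
        has_field_derivative_at_within[OF has_field_derivative_csqrt]])
  moreover have "of_real D * inverse (2 * csqrt (of_real (f y))) = complex_of_real (D / (2 * sqrt (f y)))"
    using assms(2) by (simp add: field_simps)
  ultimately show ?thesis by (simp only: o_def)
qed

lemma has_vector_derivative_comp_pair:
  fixes \<phi> :: "real \<Rightarrow> real \<Rightarrow> 'a::real_normed_vector"
  assumes "(a has_real_derivative a') (at y within S)" "(b has_real_derivative b') (at y within S)"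
    and "((\<lambda>(u, v). \<phi> u v) has_derivative (\<lambda>(h, k). h *\<^sub>R P + k *\<^sub>R Q)) (at (a y, b y))"
  shows "((\<lambda>z. \<phi> (a z) (b z)) has_vector_derivative a' *\<^sub>R P + b' *\<^sub>R Q) (at y within S)"
proof -
  have "((\<lambda>z. (a z, b z)) has_derivative (\<lambda>h. (a' * h, b' * h))) (at y within S)"
    using assms(1,2) unfolding has_field_derivative_def by (intro has_derivative_Pair) auto
  then have "(((\<lambda>(u, v). \<phi> u v) \<circ> (\<lambda>z. (a z, b z))) has_derivative
          ((\<lambda>(h, k). h *\<^sub>R P + k *\<^sub>R Q) \<circ> (\<lambda>h. (a' * h, b' * h)))) (at y within S)"
    by (rule diff_chain_within) (rule has_derivative_at_withinI, simp add: assms(3))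
  moreover have "((\<lambda>(h, k). h *\<^sub>R P + k *\<^sub>R Q) \<circ> (\<lambda>h. (a' * h, b' * h))) = (\<lambda>h. h *\<^sub>R (a' *\<^sub>R P + b' *\<^sub>R Q))"
    by (auto simp: fun_eq_iff algebra_simps)
  ultimately show ?thesis by (simp add: has_vector_derivative_def o_def)
qed

lemma has_vector_derivative_comp_scale:
  fixes g :: "real \<Rightarrow> 'a::real_normed_algebra_1"
  assumes "(g has_vector_derivative g') (at (c * y))"
  shows "((\<lambda>z. g (c * z)) has_vector_derivative of_real c * g') (at y)"
proof -
  have "((\<lambda>z. c * z) has_vector_derivative c) (at y)"
    using has_real_derivative_iff_has_vector_derivative[THEN iffD1, OF DERIV_cmult_Id] by simp
  from vector_diff_chain_within[OF this has_vector_derivative_at_within[OF assms]]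
  show ?thesis by (simp add: o_def scaleR_conv_of_real)
qed

lemma gaussian_modulated_space_derivatives:
  fixes f g :: "real \<Rightarrow> complex" and c :: complex and \<alpha> \<beta> :: real
  assumes f: "\<And>\<eta>. (f has_vector_derivative g \<eta>) (at \<eta>)"
    and g: "(g has_vector_derivative h) (at (\<beta> * x))"
  shows "((\<lambda>z. c * exp (of_real (\<alpha> * z\<^sup>2)) * f (\<beta> * z)) has_vector_derivative
            c * exp (of_real (\<alpha> * y\<^sup>2)) * (of_real \<beta> * g (\<beta> * y) + of_real (2 * \<alpha> * y) * f (\<beta> * y)))
           (at y)"
    and "((\<lambda>y. c * exp (of_real (\<alpha> * y\<^sup>2)) * (of_real \<beta> * g (\<beta> * y) + of_real (2 * \<alpha> * y) * f (\<beta> * y)))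
           has_vector_derivative c * exp (of_real (\<alpha> * x\<^sup>2)) *
             (of_real (\<beta>\<^sup>2) * h + of_real (4 * \<alpha> * \<beta> * x) * g (\<beta> * x)
              + of_real (4 * \<alpha>\<^sup>2 * x\<^sup>2 + 2 * \<alpha>) * f (\<beta> * x))) (at x)"
proof -
  have E: "((\<lambda>z. exp (complex_of_real (\<alpha> * z\<^sup>2))) has_vector_derivative
             of_real (2 * \<alpha> * y) * exp (of_real (\<alpha> * y\<^sup>2))) (at y)" for y
    by (rule has_vector_derivative_exp_of_real) (auto intro!: derivative_eq_intros)
  have L: "((\<lambda>z. complex_of_real (2 * \<alpha> * z)) has_vector_derivative of_real (2 * \<alpha>)) (at x)"
    by (auto intro!: derivative_eq_intros)
  note F = has_vector_derivative_comp_scale[OF f]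
  note G = has_vector_derivative_comp_scale[OF g]
  show "((\<lambda>z. c * exp (of_real (\<alpha> * z\<^sup>2)) * f (\<beta> * z)) has_vector_derivative
            c * exp (of_real (\<alpha> * y\<^sup>2)) * (of_real \<beta> * g (\<beta> * y) + of_real (2 * \<alpha> * y) * f (\<beta> * y)))
           (at y)"
    by (rule has_vector_derivative_eq_rhs[OF has_vector_derivative_mult[OF has_vector_derivative_mult_right[OF E] F]])
       (simp add: algebra_simps)
  show "((\<lambda>y. c * exp (of_real (\<alpha> * y\<^sup>2)) * (of_real \<beta> * g (\<beta> * y) + of_real (2 * \<alpha> * y) * f (\<beta> * y)))
           has_vector_derivative c * exp (of_real (\<alpha> * x\<^sup>2)) *
             (of_real (\<beta>\<^sup>2) * h + of_real (4 * \<alpha> * \<beta> * x) * g (\<beta> * x)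
              + of_real (4 * \<alpha>\<^sup>2 * x\<^sup>2 + 2 * \<alpha>) * f (\<beta> * x))) (at x)"
    by (rule has_vector_derivative_eq_rhs[OF has_vector_derivative_mult[OF has_vector_derivative_mult_right[OF E]
          has_vector_derivative_add[OF has_vector_derivative_mult_right[OF G]
            has_vector_derivative_mult[OF L F]]]])
       (simp add: algebra_simps power2_eq_square)
qed

lemma gaussian_modulated_time_derivative:
  fixes A :: "real \<Rightarrow> complex" and \<alpha> \<beta> T :: "real \<Rightarrow> real"
    and \<phi> :: "real \<Rightarrow> real \<Rightarrow> complex"
  assumes A: "(A has_vector_derivative A') (at t within S)"
    and \<alpha>: "(\<alpha> has_real_derivative \<alpha>') (at t within S)"
    and \<beta>: "(\<beta> has_real_derivative \<beta>') (at t within S)"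
    and T: "(T has_real_derivative T') (at t within S)"
    and \<phi>: "((\<lambda>(a, b). \<phi> a b) has_derivative (\<lambda>(h, k). h *\<^sub>R P + k *\<^sub>R Q)) (at (\<beta> t * x, T t))"
  shows "((\<lambda>s. A s * exp (of_real (\<alpha> s * x\<^sup>2)) * \<phi> (\<beta> s * x) (T s)) has_vector_derivative
           exp (of_real (\<alpha> t * x\<^sup>2)) * ((A' + A t * of_real (\<alpha>' * x\<^sup>2)) * \<phi> (\<beta> t * x) (T t)
             + A t * (of_real (\<beta>' * x) * P + of_real T' * Q))) (at t within S)"
proof -
  have E: "((\<lambda>s. exp (complex_of_real (\<alpha> s * x\<^sup>2))) has_vector_derivative
             of_real (\<alpha>' * x\<^sup>2) * exp (of_real (\<alpha> t * x\<^sup>2))) (at t within S)"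
    by (rule has_vector_derivative_exp_of_real) (auto intro!: derivative_eq_intros \<alpha>)
  have "((\<lambda>s. \<phi> (\<beta> s * x) (T s)) has_vector_derivative (\<beta>' * x) *\<^sub>R P + T' *\<^sub>R Q) (at t within S)"
    by (rule has_vector_derivative_comp_pair[where a="\<lambda>s. \<beta> s * x", OF _ T \<phi>])
       (auto intro!: derivative_eq_intros \<beta>)
  then have F: "((\<lambda>s. \<phi> (\<beta> s * x) (T s)) has_vector_derivative of_real (\<beta>' * x) * P + of_real T' * Q)
      (at t within S)"
    by (simp add: scaleR_conv_of_real)
  show ?thesis
    by (rule has_vector_derivative_eq_rhs[OF has_vector_derivative_mult[OF has_vector_derivative_mult[OF A E] F]])
       (simp add: algebra_simps)
qed

lemma modulated_heat_solution:
  fixes A :: "real \<Rightarrow> complex" and \<alpha> \<beta> T :: "real \<Rightarrow> real"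
    and \<phi> \<phi>\<eta> \<phi>\<eta>\<eta> \<phi>\<tau> :: "real \<Rightarrow> real \<Rightarrow> complex" and m V :: real
  assumes "m \<noteq> 0"
    and A: "(A has_vector_derivative of_real (\<alpha> t / m) * A t) (at t within S)"
    and \<alpha>: "(\<alpha> has_real_derivative 2 * (\<alpha> t)\<^sup>2 / m + V) (at t within S)"
    and \<beta>: "(\<beta> has_real_derivative 2 * \<alpha> t * \<beta> t / m) (at t within S)"
    and T: "(T has_real_derivative (\<beta> t)\<^sup>2 / m) (at t within S)"
    and heat: "\<And>\<eta>. ((\<lambda>(a, b). \<phi> a b) has_derivative
                  (\<lambda>(h, k). h *\<^sub>R \<phi>\<eta> \<eta> (T t) + k *\<^sub>R \<phi>\<tau> \<eta> (T t))) (at (\<eta>, T t))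
        \<and> ((\<lambda>a. \<phi>\<eta> a (T t)) has_vector_derivative \<phi>\<eta>\<eta> \<eta> (T t)) (at \<eta>)
        \<and> \<phi>\<tau> \<eta> (T t) = (1/2) * \<phi>\<eta>\<eta> \<eta> (T t)"
  defines "\<Psi> \<equiv> \<lambda>x s. A s * exp (of_real (\<alpha> s * x\<^sup>2)) * \<phi> (\<beta> s * x) (T s)"
  shows "\<exists>\<Psi>t \<Psi>x \<Psi>xx. ((\<lambda>s. \<Psi> x s) has_vector_derivative \<Psi>t) (at t within S)
          \<and> (\<forall>y. ((\<lambda>z. \<Psi> z t) has_vector_derivative \<Psi>x y) (at y))
          \<and> (\<Psi>x has_vector_derivative \<Psi>xx) (at x)
          \<and> \<Psi>t = of_real (1 / (2 * m)) * \<Psi>xx + of_real (V * x\<^sup>2) * \<Psi> x t"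
proof -
  note \<phi>_joint = heat[THEN conjunct1] and \<phi>\<eta>_partial = heat[THEN conjunct2, THEN conjunct1]
    and heat_eq = heat[THEN conjunct2, THEN conjunct2]
  have "((\<lambda>a. \<phi> a (T t)) has_vector_derivative 1 *\<^sub>R \<phi>\<eta> \<eta> (T t) + 0 *\<^sub>R \<phi>\<tau> \<eta> (T t)) (at \<eta>)" for \<eta>
    by (rule has_vector_derivative_comp_pair[where a="\<lambda>a. a" and b="\<lambda>_. T t", OF _ _ \<phi>_joint])
       (auto intro!: derivative_eq_intros)
  then have \<phi>_partial: "((\<lambda>a. \<phi> a (T t)) has_vector_derivative \<phi>\<eta> \<eta> (T t)) (at \<eta>)" for \<eta>
    by simp
  note space = gaussian_modulated_space_derivatives[where c="A t" and \<alpha>="\<alpha> t" and \<beta>="\<beta> t",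
      OF \<phi>_partial \<phi>\<eta>_partial]
  note time = gaussian_modulated_time_derivative[OF A \<alpha> \<beta> T \<phi>_joint]
  show ?thesis
    unfolding \<Psi>_def
    by (rule exI conjI allI time space(1) space(2))+
       (use \<open>m \<noteq> 0\<close> in \<open>simp add: heat_eq field_simps\<close>)
qed

lemma riccati_coefficient_has_real_derivative:
  fixes \<mu> r rd :: "real \<Rightarrow> real"
  assumes "(\<mu> has_real_derivative \<mu>d) (at t within S)" "(r has_real_derivative rd t) (at t within S)"
    and "(rd has_real_derivative rdd) (at t within S)"
    and ode: "rdd + \<mu>d / \<mu> t * rd t + w * r t = 0" and "\<mu> t \<noteq> 0" "r t \<noteq> 0"
  shows "((\<lambda>s. - (\<mu> s * rd s) / (2 * r s)) has_real_derivative
           2 * (- (\<mu> t * rd t) / (2 * r t))\<^sup>2 / \<mu> t + \<mu> t * w / 2) (at t within S)"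
proof -
  have "rdd = - (\<mu>d / \<mu> t * rd t) - w * r t" using ode by simp
  with assms(3) have rd: "(rd has_real_derivative - (\<mu>d / \<mu> t * rd t) - w * r t) (at t within S)"
    by simp
  with assms(5,6) show ?thesis
    by (auto intro!: derivative_eq_intros assms(1,2) rd simp: field_simps power2_eq_square)
qed

lemma scaling_has_derivative:
  fixes r :: "real \<Rightarrow> real"
  assumes r: "(r has_real_derivative rd) (at t within S)" and "\<mu> \<noteq> 0" "r t0 / r t > 0"
  defines "\<alpha> \<equiv> - (\<mu> * rd) / (2 * r t)"
  shows "((\<lambda>s. r t0 / r s) has_real_derivative 2 * \<alpha> * (r t0 / r t) / \<mu>) (at t within S)"
    and "((\<lambda>s. csqrt (of_real (r t0 / r s))) has_vector_derivative
           of_real (\<alpha> / \<mu>) * csqrt (of_real (r t0 / r t))) (at t within S)"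
proof -
  have "r t \<noteq> 0" using assms(3) by auto
  with assms(2) show B: "((\<lambda>s. r t0 / r s) has_real_derivative 2 * \<alpha> * (r t0 / r t) / \<mu>) (at t within S)"
    unfolding \<alpha>_def by (auto intro!: derivative_eq_intros r simp: field_simps power2_eq_square)
  have "2 * \<alpha> * (r t0 / r t) / \<mu> / (2 * sqrt (r t0 / r t)) = \<alpha> / \<mu> * (r t0 / r t / sqrt (r t0 / r t))"
    by (simp add: field_simps)
  also have "r t0 / r t / sqrt (r t0 / r t) = sqrt (r t0 / r t)"
    by (rule real_div_sqrt) (use assms(3) in simp)
  finally have "complex_of_real (2 * \<alpha> * (r t0 / r t) / \<mu> / (2 * sqrt (r t0 / r t)))
      = of_real (\<alpha> / \<mu>) * csqrt (of_real (r t0 / r t))"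
    using assms(3) by (simp add: csqrt_of_real)
  with has_vector_derivative_csqrt_of_real[OF B assms(3)]
  show "((\<lambda>s. csqrt (of_real (r t0 / r s))) has_vector_derivative
           of_real (\<alpha> / \<mu>) * csqrt (of_real (r t0 / r t))) (at t within S)"
    by (simp only:)
qed

theorem proposition1:
  fixes I :: "real set" and t0 r0 :: real
    and \<mu> \<mu>d w2 r rd rdd :: "real \<Rightarrow> real"
    and \<phi> \<phi>\<eta> \<phi>\<eta>\<eta> \<phi>\<tau> :: "real \<Rightarrow> real \<Rightarrow> complex"
    and \<Phi>0 :: "real \<Rightarrow> complex"
  assumes I: "is_interval I" "t0 \<in> I"
    and mu_nz: "\<And>t. t \<in> I \<Longrightarrow> \<mu> t \<noteq> 0"
    and mu_deriv: "\<And>t. t \<in> I \<Longrightarrow> (\<mu> has_real_derivative \<mu>d t) (at t within I)"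
    and r_deriv: "\<And>t. t \<in> I \<Longrightarrow> (r has_real_derivative rd t) (at t within I)"
    and rd_deriv: "\<And>t. t \<in> I \<Longrightarrow> (rd has_real_derivative rdd t) (at t within I)"
    and ode: "\<And>t. t \<in> I \<Longrightarrow> rdd t + \<mu>d t / \<mu> t * rd t + w2 t * r t = 0"
    and init_r: "r t0 = r0" "r0 \<noteq> 0" "rd t0 = 0"
    and heat: "\<And>\<eta> t. t \<in> I \<Longrightarrow> (\<forall>s\<in>closed_segment t0 t. r s \<noteq> 0) \<Longrightarrow>
        ((\<lambda>(a, b). \<phi> a b) has_derivative
            (\<lambda>(h, k). h *\<^sub>R \<phi>\<eta> \<eta> (tau \<mu> r t0 t) + k *\<^sub>R \<phi>\<tau> \<eta> (tau \<mu> r t0 t)))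
          (at (\<eta>, tau \<mu> r t0 t))
        \<and> ((\<lambda>a. \<phi>\<eta> a (tau \<mu> r t0 t)) has_vector_derivative \<phi>\<eta>\<eta> \<eta> (tau \<mu> r t0 t)) (at \<eta>)
        \<and> \<phi>\<tau> \<eta> (tau \<mu> r t0 t) = (1/2) * \<phi>\<eta>\<eta> \<eta> (tau \<mu> r t0 t)"
    and heat_init: "\<And>\<eta>. \<phi> \<eta> 0 = \<Phi>0 \<eta>"
  shows "(\<forall>x. Phi \<mu> r rd \<phi> t0 x t0 = \<Phi>0 x)
    \<and> (\<forall>t\<in>I. (\<forall>s\<in>closed_segment t0 t. r s \<noteq> 0) \<longrightarrow> (\<forall>x.
        \<exists>\<Phi>t \<Phi>x \<Phi>xx.
          ((\<lambda>s. Phi \<mu> r rd \<phi> t0 x s) has_vector_derivative \<Phi>t) (at t within I)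
          \<and> (\<forall>y. ((\<lambda>z. Phi \<mu> r rd \<phi> t0 z t) has_vector_derivative \<Phi>x y) (at y))
          \<and> (\<Phi>x has_vector_derivative \<Phi>xx) (at x)
          \<and> \<Phi>t = complex_of_real (1 / (2 * \<mu> t)) * \<Phi>xx
                 + complex_of_real (\<mu> t * w2 t / 2 * x\<^sup>2) * Phi \<mu> r rd \<phi> t0 x t))"
proof (intro conjI ballI impI allI, goal_cases)
  case (1 x)
  show ?case using init_r heat_init by (simp add: Phi_def eta_def tau_def oint_def)
next
  case (2 t x)
  then have t: "t \<in> I" and seg: "\<forall>s\<in>closed_segment t0 t. r s \<noteq> 0" by blast+
  have cont: "continuous_on I \<mu>" "continuous_on I r"
    using mu_deriv r_deriv by (auto simp: continuous_on_eq_continuous_within intro: DERIV_continuous)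
  have "closed_segment t0 t \<subseteq> I"
    using I t by (simp add: closed_segment_subset is_interval_convex)
  then have "0 < r t0 * r t"
    using same_sign_on_segment[OF continuous_on_subset[OF cont(2)] seg] by blast
  then have pos: "0 < r t0 / r t" by (simp add: zero_less_divide_iff zero_less_mult_iff)
  have nz: "\<mu> t \<noteq> 0" "r t \<noteq> 0" using mu_nz t seg by auto
  note scaling = scaling_has_derivative[OF r_deriv[OF t] nz(1) pos]
  have tau': "(tau \<mu> r t0 has_real_derivative (r t0 / r t)\<^sup>2 / \<mu> t) (at t within I)"
    using tau_has_real_derivative[OF I t cont] mu_nz seg by (simp add: power_divide ac_simps)
  show ?case
    unfolding Phi_def eta_def
    by (rule modulated_heat_solution[where A="\<lambda>s. csqrt (of_real (r t0 / r s))" and \<beta>="\<lambda>s. r t0 / r s"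
        and \<alpha>="\<lambda>s. - (\<mu> s * rd s) / (2 * r s)" and T="tau \<mu> r t0"
        and t=t and m="\<mu> t" and V="\<mu> t * w2 t / 2" and S=I
        and \<phi>=\<phi> and \<phi>\<eta>=\<phi>\<eta> and \<phi>\<eta>\<eta>=\<phi>\<eta>\<eta> and \<phi>\<tau>=\<phi>\<tau>,
        OF nz(1) scaling(2)
        riccati_coefficient_has_real_derivative[OF mu_deriv r_deriv rd_deriv ode nz, OF t t t t]
        scaling(1) tau' heat[OF t seg]])
qed

end
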